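(* Let $M$ be a magma satisfying $(xy)z = xz$ and $x(yz) = xz$ for all $x,y,z\in M$. Then $M$ satisfies $xy = xz$ and $(xy)z = xy$ for all $x,y,z\in M$ if and only if $M$ avoids the $2$-element right zero band $2_{RZ}$ on $\{0,1\}$ with Cayley table \[ \begin{array}{c|cc} 2_{RZ} & 0 & 1 \\ \hline 0 & 0 & 1 \\ 1 & 0 & 1 \end{array}. \]
   Context: A magma is a nonempty set with a binary operation, written by juxtaposition. A magma $M$ avoids a magma $F$ if no submagma of $M$ is isomorphic to $F$. *)

theory Defs
  imports Main
begin

definition magma :: "'a set \<Rightarrow> ('a \<Rightarrow> 'a \<Rightarrow> 'a) \<Rightarrow> bool" where
  "magma M f \<longleftrightarrow> M \<noteq> {} \<and> (\<forall>x\<in>M. \<forall>y\<in>M. f x y \<in> M)"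

definition submagma :: "'a set \<Rightarrow> 'a set \<Rightarrow> ('a \<Rightarrow> 'a \<Rightarrow> 'a) \<Rightarrow> bool" where
  "submagma S M f \<longleftrightarrow> S \<noteq> {} \<and> S \<subseteq> M \<and> (\<forall>x\<in>S. \<forall>y\<in>S. f x y \<in> S)"

definition magma_iso :: "('b \<Rightarrow> 'a) \<Rightarrow> 'b set \<Rightarrow> ('b \<Rightarrow> 'b \<Rightarrow> 'b) \<Rightarrow> 'a set \<Rightarrow> ('a \<Rightarrow> 'a \<Rightarrow> 'a) \<Rightarrow> bool" where
  "magma_iso h A g B f \<longleftrightarrow> bij_betw h A B \<and> (\<forall>x\<in>A. \<forall>y\<in>A. h (g x y) = f (h x) (h y))"

definition avoids :: "'a set \<Rightarrow> ('a \<Rightarrow> 'a \<Rightarrow> 'a) \<Rightarrow> 'b set \<Rightarrow> ('b \<Rightarrow> 'b \<Rightarrow> 'b) \<Rightarrow> bool" where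
  "avoids M f F g \<longleftrightarrow> \<not> (\<exists>S h. submagma S M f \<and> magma_iso h F g S f)"

definition RZ2_carrier :: "nat set" where "RZ2_carrier = {0, 1}"
definition RZ2_op :: "nat \<Rightarrow> nat \<Rightarrow> nat" where "RZ2_op x y = y"

end

theory Submission
  imports Defs
begin

(* Under (xy)z = xz and x(yz) = xz, any two products xy and xz with a common left factor
   multiply as a right zero band: (xy)(xz) = x(xz) = xz. So 2_RZ embeds as soon as
   left multiplication by some x is non-constant, and conversely a copy {a, b} of 2_RZ
   forces a = ba = bb = b once every left multiplication is constant. *)

definition right_zero_pair :: "('a \<Rightarrow> 'a \<Rightarrow> 'a) \<Rightarrow> 'a \<Rightarrow> 'a \<Rightarrow> bool" where
  "right_zero_pair f a b \<longleftrightarrow> a \<noteq> b \<and> (\<forall>x\<in>{a, b}. \<forall>y\<in>{a, b}. f x y = y)"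

lemma avoids_RZ2_iff_no_right_zero_pair:
  "avoids M f RZ2_carrier RZ2_op \<longleftrightarrow> \<not> (\<exists>a\<in>M. \<exists>b\<in>M. right_zero_pair f a b)"
proof
  assume "avoids M f RZ2_carrier RZ2_op"
  show "\<not> (\<exists>a\<in>M. \<exists>b\<in>M. right_zero_pair f a b)"
  proof
    assume "\<exists>a\<in>M. \<exists>b\<in>M. right_zero_pair f a b"
    then obtain a b where ab: "a \<in> M" "b \<in> M" "right_zero_pair f a b" by blast
    define h where "h = (\<lambda>n::nat. if n = 0 then a else b)"
    have "submagma {a, b} M f"
      using ab by (auto simp: submagma_def right_zero_pair_def)
    moreover have "magma_iso h RZ2_carrier RZ2_op {a, b} f"
      using ab(3)
      by (auto simp: magma_iso_def RZ2_carrier_def RZ2_op_def bij_betw_def h_def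
          right_zero_pair_def)
    ultimately show False
      using \<open>avoids M f RZ2_carrier RZ2_op\<close> by (auto simp: avoids_def)
  qed
next
  assume no_pair: "\<not> (\<exists>a\<in>M. \<exists>b\<in>M. right_zero_pair f a b)"
  show "avoids M f RZ2_carrier RZ2_op"
    unfolding avoids_def
  proof clarify
    fix S h
    assume S: "submagma S M f" and h: "magma_iso h RZ2_carrier RZ2_op S f"
    have bij: "bij_betw h {0, 1} S"
      and hom: "\<forall>x\<in>{0::nat, 1}. \<forall>y\<in>{0, 1}. f (h x) (h y) = h y"
      using h by (auto simp: magma_iso_def RZ2_carrier_def RZ2_op_def)
    have "h 0 \<in> M" "h 1 \<in> M"
      using bij S by (auto simp: bij_betw_def submagma_def)
    moreover have "right_zero_pair f (h 0) (h 1)"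
      using bij hom by (auto simp: right_zero_pair_def bij_betw_def)
    ultimately show False
      using no_pair by blast
  qed
qed

lemma right_zero_pair_of_distinct_products:
  assumes "\<forall>x\<in>M. \<forall>y\<in>M. f x y \<in> M"
    and "\<forall>x\<in>M. \<forall>y\<in>M. \<forall>z\<in>M. f (f x y) z = f x z"
    and "\<forall>x\<in>M. \<forall>y\<in>M. \<forall>z\<in>M. f x (f y z) = f x z"
    and "x \<in> M" "y \<in> M" "z \<in> M" "f x y \<noteq> f x z"
  shows "right_zero_pair f (f x y) (f x z)"
  using assms by (simp add: right_zero_pair_def)

lemma no_right_zero_pair_if_left_constant:
  assumes "\<forall>x\<in>M. \<forall>y\<in>M. \<forall>z\<in>M. f x y = f x z" and "a \<in> M" "b \<in> M"
  shows "\<not> right_zero_pair f a b"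
proof
  assume "right_zero_pair f a b"
  then have "a \<noteq> b" "f b a = a" "f b b = b"
    by (auto simp: right_zero_pair_def)
  with assms show False
    by metis
qed

lemma left_constant_imp_products_left_zero:
  assumes "\<forall>x\<in>M. \<forall>y\<in>M. \<forall>z\<in>M. f (f x y) z = f x z"
    and "\<forall>x\<in>M. \<forall>y\<in>M. \<forall>z\<in>M. f x y = f x z"
  shows "\<forall>x\<in>M. \<forall>y\<in>M. \<forall>z\<in>M. f (f x y) z = f x y"
  using assms by metis

theorem mainTheorem17:
  fixes M :: "'a set" and f :: "'a \<Rightarrow> 'a \<Rightarrow> 'a"
  assumes "magma M f"
    and "\<forall>x\<in>M. \<forall>y\<in>M. \<forall>z\<in>M. f (f x y) z = f x z"
    and "\<forall>x\<in>M. \<forall>y\<in>M. \<forall>z\<in>M. f x (f y z) = f x z"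
  shows "((\<forall>x\<in>M. \<forall>y\<in>M. \<forall>z\<in>M. f x y = f x z) \<and>
          (\<forall>x\<in>M. \<forall>y\<in>M. \<forall>z\<in>M. f (f x y) z = f x y))
         \<longleftrightarrow> avoids M f RZ2_carrier RZ2_op"
proof -
  have closed: "\<forall>x\<in>M. \<forall>y\<in>M. f x y \<in> M"
    using assms(1) by (simp add: magma_def)
  have "(\<forall>x\<in>M. \<forall>y\<in>M. \<forall>z\<in>M. f x y = f x z) \<longleftrightarrow>
        \<not> (\<exists>a\<in>M. \<exists>b\<in>M. right_zero_pair f a b)"
  proof
    assume "\<forall>x\<in>M. \<forall>y\<in>M. \<forall>z\<in>M. f x y = f x z"
    then show "\<not> (\<exists>a\<in>M. \<exists>b\<in>M. right_zero_pair f a b)"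
      by (blast dest: no_right_zero_pair_if_left_constant)
  next
    assume "\<not> (\<exists>a\<in>M. \<exists>b\<in>M. right_zero_pair f a b)"
    then show "\<forall>x\<in>M. \<forall>y\<in>M. \<forall>z\<in>M. f x y = f x z"
      using right_zero_pair_of_distinct_products[OF closed assms(2,3)] closed by blast
  qed
  then show ?thesis
    using left_constant_imp_products_left_zero[OF assms(2)]
    by (auto simp: avoids_RZ2_iff_no_right_zero_pair)
qed

end
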